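(* Let $\Psi$ be a marked $A_3$ simplicial complex satisfying CCCC. Then the closed stars of two distinct vertices of type $\hat b$ in $\Psi$ either are disjoint, or intersect in exactly one vertex, or intersect in exactly one (closed) edge.
   Context: Let $\Delta$ be the spherical triangle with vertices labelled $\hat a,\hat b,\hat c$, with angle $\pi/3$ at $\hat a$ and $\hat c$ and angle $\pi/2$ at $\hat b$. A marked $A_3$ simplicial complex is a homogeneous $2$-dimensional simplicial complex $\Psi$ in which each $2$-simplex $\sigma$ has an isomorphism $m_\sigma:\sigma\to\Delta$ such that $m_\sigma(x)=m_{\sigma'}(x)$ for all $x\in\sigma\cap\sigma'$; a vertex has type $\hat a,\hat b,\hat c$ according to the label of its image under any marking. $\Psi$ satisfies CCCC if: (1) the link of every vertex of type $\hat a$ or $\hat c$ has girth at least $6$; (2) the link of every vertex of type $\hat b$ is a complete bipartite graph containing an embedded $4$-cycle; (3) (i) every embedded closed edge path $w_1,u_1,w_2,u_2$ with $w_1,w_2$ of type $\hat a$ and $u_1,u_2$ of type $\hat c$ is filled by a vertex $v$ of type $\hat b$ such that $\{v,w_1,u_1\},\{v,u_1,w_2\},\{v,w_2,u_2\},\{v,u_2,w_1\}$ are $2$-simplices; (ii.a) every embedded closed edge path of length $6$ alternating between types $\hat a$ and $\hat b$ is filled by a vertex of type $\hat c$ forming a $2$-simplex with each of its six edges; (ii.b) the same with $\hat a$ and $\hat c$ interchanged. *)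

theory Defs
  imports Main
begin

text \<open>Labels of the vertices of the model spherical triangle Delta:
  angle pi/3 at A (= a-hat) and C (= c-hat), angle pi/2 at B (= b-hat).\<close>
datatype lbl = A | B | C

definition simplicial_complex :: "'v set set \<Rightarrow> bool" where
  "simplicial_complex S \<longleftrightarrow>
     (\<forall>\<sigma>\<in>S. finite \<sigma> \<and> \<sigma> \<noteq> {}) \<and>
     (\<forall>\<sigma>\<in>S. \<forall>\<tau>. \<tau> \<subseteq> \<sigma> \<and> \<tau> \<noteq> {} \<longrightarrow> \<tau> \<in> S)"

definition vertices :: "'v set set \<Rightarrow> 'v set" where
  "vertices S = \<Union>S"

definition two_simplex :: "'v set set \<Rightarrow> 'v set \<Rightarrow> bool" where
  "two_simplex S \<sigma> \<longleftrightarrow> \<sigma> \<in> S \<and> card \<sigma> = 3"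

definition homogeneous_2dim :: "'v set set \<Rightarrow> bool" where
  "homogeneous_2dim S \<longleftrightarrow> simplicial_complex S \<and>
     (\<forall>\<sigma>\<in>S. card \<sigma> \<le> 3 \<and> (\<exists>\<rho>. two_simplex S \<rho> \<and> \<sigma> \<subseteq> \<rho>))"

text \<open>A marking: each 2-simplex sigma gets an isomorphism m sigma onto Delta, i.e. a
  bijection of its vertices onto the labelled vertices of Delta, compatible on
  intersections.\<close>
definition marked_A3 :: "'v set set \<Rightarrow> ('v set \<Rightarrow> 'v \<Rightarrow> lbl) \<Rightarrow> bool" where
  "marked_A3 S m \<longleftrightarrow> homogeneous_2dim S \<and>
     (\<forall>\<sigma>. two_simplex S \<sigma> \<longrightarrow> bij_betw (m \<sigma>) \<sigma> {A, B, C}) \<and>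
     (\<forall>\<sigma> \<sigma>' x. two_simplex S \<sigma> \<and> two_simplex S \<sigma>' \<and> x \<in> \<sigma> \<inter> \<sigma>' \<longrightarrow> m \<sigma> x = m \<sigma>' x)"

definition vtype :: "'v set set \<Rightarrow> ('v set \<Rightarrow> 'v \<Rightarrow> lbl) \<Rightarrow> 'v \<Rightarrow> lbl" where
  "vtype S m v = m (SOME \<sigma>. two_simplex S \<sigma> \<and> v \<in> \<sigma>) v"

definition link_verts :: "'v set set \<Rightarrow> 'v \<Rightarrow> 'v set" where
  "link_verts S v = {w. w \<noteq> v \<and> {v, w} \<in> S}"

definition link_adj :: "'v set set \<Rightarrow> 'v \<Rightarrow> 'v \<Rightarrow> 'v \<Rightarrow> bool" where
  "link_adj S v w u \<longleftrightarrow> two_simplex S {v, w, u}"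

definition is_cycle :: "('a \<Rightarrow> 'a \<Rightarrow> bool) \<Rightarrow> 'a list \<Rightarrow> bool" where
  "is_cycle adj xs \<longleftrightarrow> length xs \<ge> 3 \<and> distinct xs \<and>
     (\<forall>i < length xs. adj (xs ! i) (xs ! ((i + 1) mod length xs)))"

definition girth_ge6 :: "('a \<Rightarrow> 'a \<Rightarrow> bool) \<Rightarrow> bool" where
  "girth_ge6 adj \<longleftrightarrow> (\<forall>xs. is_cycle adj xs \<longrightarrow> length xs \<ge> 6)"

definition complete_bipartite :: "'a set \<Rightarrow> ('a \<Rightarrow> 'a \<Rightarrow> bool) \<Rightarrow> bool" where
  "complete_bipartite V adj \<longleftrightarrow> (\<exists>X Y. X \<inter> Y = {} \<and> X \<union> Y = V \<and>
     (\<forall>x y. adj x y \<longleftrightarrow> (x \<in> X \<and> y \<in> Y) \<or> (x \<in> Y \<and> y \<in> X)))"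

definition closed_edge_path :: "'v set set \<Rightarrow> 'v list \<Rightarrow> bool" where
  "closed_edge_path S xs \<longleftrightarrow> is_cycle (\<lambda>x y. {x, y} \<in> S) xs"

definition CCCC :: "'v set set \<Rightarrow> ('v set \<Rightarrow> 'v \<Rightarrow> lbl) \<Rightarrow> bool" where
  "CCCC S m \<longleftrightarrow>
    \<comment> \<open>(1)\<close>
    (\<forall>v \<in> vertices S. vtype S m v \<in> {A, C} \<longrightarrow> girth_ge6 (link_adj S v)) \<and>
    \<comment> \<open>(2)\<close>
    (\<forall>v \<in> vertices S. vtype S m v = B \<longrightarrow>
        complete_bipartite (link_verts S v) (link_adj S v) \<and>
        (\<exists>xs. length xs = 4 \<and> is_cycle (link_adj S v) xs)) \<and>
    \<comment> \<open>(3)(i)\<close>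
    (\<forall>w1 u1 w2 u2. closed_edge_path S [w1, u1, w2, u2] \<and>
        vtype S m w1 = A \<and> vtype S m w2 = A \<and> vtype S m u1 = C \<and> vtype S m u2 = C \<longrightarrow>
        (\<exists>v. vtype S m v = B \<and> two_simplex S {v, w1, u1} \<and> two_simplex S {v, u1, w2} \<and>
             two_simplex S {v, w2, u2} \<and> two_simplex S {v, u2, w1})) \<and>
    \<comment> \<open>(3)(ii.a)\<close>
    (\<forall>xs. closed_edge_path S xs \<and> length xs = 6 \<and>
        (\<forall>i<6. vtype S m (xs ! i) = (if even i then A else B)) \<longrightarrow>
        (\<exists>v. vtype S m v = C \<and> (\<forall>i<6. two_simplex S {v, xs ! i, xs ! ((i + 1) mod 6)}))) \<and>
    \<comment> \<open>(3)(ii.b)\<close>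
    (\<forall>xs. closed_edge_path S xs \<and> length xs = 6 \<and>
        (\<forall>i<6. vtype S m (xs ! i) = (if even i then C else B)) \<longrightarrow>
        (\<exists>v. vtype S m v = A \<and> (\<forall>i<6. two_simplex S {v, xs ! i, xs ! ((i + 1) mod 6)})))"

definition closed_star :: "'v set set \<Rightarrow> 'v \<Rightarrow> 'v set set" where
  "closed_star S v = {\<tau> \<in> S. \<exists>\<sigma>\<in>S. v \<in> \<sigma> \<and> \<tau> \<subseteq> \<sigma>}"

end

theory Submission
  imports Defs
begin

text \<open>Two vertices of type \<open>B\<close> are not adjacent, so every simplex in both closed stars is
  spanned by common neighbours of \<open>v\<close> and \<open>w\<close>, none of type \<open>B\<close>. Two common neighbours
  of the same type would, together with \<open>v\<close> and \<open>w\<close> (and possibly a vertex filling a square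
  by condition (3)(i)), give a 4-cycle in the link of a vertex of type \<open>A\<close> or \<open>C\<close>,
  contradicting the girth condition. Hence there are at most two common neighbours, of
  types \<open>A\<close> and \<open>C\<close>; since links of \<open>B\<close>-vertices are complete bipartite, two such
  neighbours span a triangle with \<open>v\<close> and one with \<open>w\<close>, so their edge lies in both stars.\<close>

lemma no_four_distinct_labels: "\<not> distinct [a, b, c, d :: lbl]"
  by (cases a; cases b; cases c; cases d) auto

lemma is_cycle_4:
  "is_cycle adj [a, b, c, d] \<longleftrightarrow> distinct [a, b, c, d] \<and> adj a b \<and> adj b c \<and> adj c d \<and> adj d a"
proof -
  have "(\<forall>i < Suc (Suc (Suc (Suc 0))). P i) \<longleftrightarrow> P 0 \<and> P 1 \<and> P 2 \<and> P 3" for P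
    by (auto simp: less_Suc_eq numeral_eq_Suc)
  then show ?thesis
    unfolding is_cycle_def by simp
qed

lemma closed_star_memI:
  assumes "simplicial_complex S" "\<sigma> \<in> S" "v \<in> \<sigma>" "\<tau> \<subseteq> \<sigma>" "\<tau> \<noteq> {}"
  shows "\<tau> \<in> closed_star S v"
  using assms unfolding closed_star_def simplicial_complex_def by blast

lemma singleton_in_closed_star:
  assumes "simplicial_complex S" "x \<in> link_verts S v"
  shows "{x} \<in> closed_star S v"
  using assms closed_star_memI[of S "{v, x}" v "{x}"] unfolding link_verts_def by blast

lemma closed_star_inter_subset_common_link:
  assumes "simplicial_complex S" "{v, w} \<notin> S"
  shows "closed_star S v \<inter> closed_star S w \<subseteq> {\<tau>. \<tau> \<noteq> {} \<and> \<tau> \<subseteq> link_verts S v \<inter> link_verts S w}"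
proof
  fix \<tau> assume "\<tau> \<in> closed_star S v \<inter> closed_star S w"
  then obtain \<sigma> \<sigma>' where \<sigma>: "\<sigma> \<in> S" "v \<in> \<sigma>" "\<tau> \<subseteq> \<sigma>" and \<sigma>': "\<sigma>' \<in> S" "w \<in> \<sigma>'" "\<tau> \<subseteq> \<sigma>'"
    and "\<tau> \<in> S" unfolding closed_star_def by blast
  have face: "\<rho> \<in> S" if "\<rho> \<subseteq> \<sigma> \<or> \<rho> \<subseteq> \<sigma>'" "\<rho> \<noteq> {}" for \<rho>
    using that \<sigma>(1) \<sigma>'(1) assms(1) unfolding simplicial_complex_def by blast
  have "\<tau> \<noteq> {}"
    using \<open>\<tau> \<in> S\<close> assms(1) unfolding simplicial_complex_def by blast
  moreover have "x \<in> link_verts S v \<inter> link_verts S w" if "x \<in> \<tau>" for x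
  proof -
    have "{v, x} \<in> S" "{w, x} \<in> S"
      using that \<sigma> \<sigma>' by (auto intro!: face)
    moreover have "x \<noteq> v" "x \<noteq> w"
      using that \<sigma> \<sigma>' face[of "{v, w}"] assms(2) by auto
    ultimately show ?thesis
      unfolding link_verts_def by blast
  qed
  ultimately show "\<tau> \<in> {\<tau>. \<tau> \<noteq> {} \<and> \<tau> \<subseteq> link_verts S v \<inter> link_verts S w}"
    by blast
qed

lemma card_le_2_cases:
  assumes "finite N" "card N \<le> 2"
  obtains "N = {}" | x where "N = {x}" | x y where "x \<noteq> y" "N = {x, y}"
proof -
  have "card N = 0 \<or> card N = 1 \<or> card N = 2"
    using assms(2) by linarith
  then show thesis
    using assms(1) that by (auto simp: card_1_singleton_iff card_2_iff)
qed

lemma nonempty_subsets_card_le_2: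
  assumes "finite N" "card N \<le> 2"
  obtains "{\<tau>. \<tau> \<noteq> {} \<and> \<tau> \<subseteq> N} = {}"
    | x where "{\<tau>. \<tau> \<noteq> {} \<and> \<tau> \<subseteq> N} = {{x}}"
    | x y where "x \<noteq> y" "{\<tau>. \<tau> \<noteq> {} \<and> \<tau> \<subseteq> N} = {{x}, {y}, {x, y}}"
  using assms
proof (cases rule: card_le_2_cases)
  case (3 x y)
  then have "{\<tau>. \<tau> \<noteq> {} \<and> \<tau> \<subseteq> N} = {{x}, {y}, {x, y}}"
    by auto
  with \<open>x \<noteq> y\<close> show thesis
    by (rule that(3))
qed (use that in auto)

locale marked_complex =
  fixes S :: "'v set set" and m :: "'v set \<Rightarrow> 'v \<Rightarrow> lbl"
  assumes marked: "marked_A3 S m"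
begin

abbreviation label :: "'v \<Rightarrow> lbl" where
  "label \<equiv> vtype S m"

lemma simplicial: "simplicial_complex S"
  using marked unfolding marked_A3_def homogeneous_2dim_def by blast

lemma face_in_complex: "\<sigma> \<in> S \<Longrightarrow> \<tau> \<subseteq> \<sigma> \<Longrightarrow> \<tau> \<noteq> {} \<Longrightarrow> \<tau> \<in> S"
  using simplicial unfolding simplicial_complex_def by blast

lemma label_eq_marking:
  assumes "two_simplex S \<sigma>" "x \<in> \<sigma>"
  shows "label x = m \<sigma> x"
proof -
  let ?\<sigma>0 = "SOME \<sigma>. two_simplex S \<sigma> \<and> x \<in> \<sigma>"
  have "two_simplex S ?\<sigma>0 \<and> x \<in> ?\<sigma>0"
    using someI_ex[of "\<lambda>\<sigma>. two_simplex S \<sigma> \<and> x \<in> \<sigma>"] assms by blast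
  moreover have "\<And>\<sigma> \<sigma>'. two_simplex S \<sigma> \<Longrightarrow> two_simplex S \<sigma>' \<Longrightarrow> x \<in> \<sigma> \<inter> \<sigma>' \<Longrightarrow> m \<sigma> x = m \<sigma>' x"
    using marked unfolding marked_A3_def by blast
  ultimately show ?thesis
    using assms unfolding vtype_def by blast
qed

lemma two_simplex_labels_distinct:
  assumes "two_simplex S {x, y, z}"
  shows "distinct [label x, label y, label z]"
proof -
  have "distinct [x, y, z]"
    using assms unfolding two_simplex_def by (intro card_distinct) simp
  moreover have "inj_on (m {x, y, z}) {x, y, z}"
    using assms marked unfolding marked_A3_def bij_betw_def by blast
  ultimately show ?thesis
    using label_eq_marking[OF assms] by (auto simp: inj_on_def)
qed

lemma two_simplex_edge: "two_simplex S {x, y, z} \<Longrightarrow> {x, y} \<in> S"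
  unfolding two_simplex_def by (rule face_in_complex) auto

lemma edge_in_two_simplex:
  assumes "{x, y} \<in> S" "x \<noteq> y"
  obtains z where "two_simplex S {x, y, z}"
proof -
  obtain \<rho> where \<rho>: "two_simplex S \<rho>" "{x, y} \<subseteq> \<rho>"
    using assms(1) marked unfolding marked_A3_def homogeneous_2dim_def by blast
  then have "card (\<rho> - {x, y}) = 1"
    using assms(2) unfolding two_simplex_def by (simp add: card_Diff_subset)
  then obtain z where "\<rho> - {x, y} = {z}"
    by (rule card_1_singletonE)
  then have "\<rho> = {x, y, z}" using \<rho>(2) by blast
  then show thesis using \<rho>(1) that by blast
qed

lemma edge_labels_distinct:
  assumes "{x, y} \<in> S" "x \<noteq> y"
  shows "label x \<noteq> label y"
proof -
  obtain z where "two_simplex S {x, y, z}"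
    using edge_in_two_simplex[OF assms] .
  then show ?thesis
    using two_simplex_labels_distinct by fastforce
qed

end

locale CCCC_complex = marked_complex +
  assumes cccc: "CCCC S m"
begin

lemma girth_condition:
  assumes "v \<in> vertices S" "label v \<noteq> B"
  shows "girth_ge6 (link_adj S v)"
proof -
  have "label v \<in> {A, C}"
    using assms(2) by (cases "label v") auto
  then show ?thesis
    using assms(1) cccc[unfolded CCCC_def, THEN conjunct1] by blast
qed

lemma B_link_condition:
  assumes "v \<in> vertices S" "label v = B"
  shows "complete_bipartite (link_verts S v) (link_adj S v)"
    and "\<exists>xs. length xs = 4 \<and> is_cycle (link_adj S v) xs"
  using assms cccc[unfolded CCCC_def, THEN conjunct2, THEN conjunct1] by blast+

lemma AC_square_condition:
  assumes "closed_edge_path S [w1, u1, w2, u2]"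
    and "label w1 = A" "label w2 = A" "label u1 = C" "label u2 = C"
  obtains u where "label u = B" "two_simplex S {u, w1, u1}" "two_simplex S {u, u1, w2}"
    "two_simplex S {u, w2, u2}" "two_simplex S {u, u2, w1}"
  using assms cccc[unfolded CCCC_def, THEN conjunct2, THEN conjunct2, THEN conjunct1] by blast

lemma no_square_around_AC_vertex:
  assumes "label c \<noteq> B"
    and "two_simplex S {c, a, p}" "two_simplex S {c, p, b}" "two_simplex S {c, b, q}" "two_simplex S {c, q, a}"
    and "a \<noteq> b" "p \<noteq> q"
  shows False
proof -
  have "c \<in> vertices S"
    using assms(2) unfolding two_simplex_def vertices_def by blast
  then have "girth_ge6 (link_adj S c)"
    using girth_condition assms(1) by blast
  moreover have "a \<noteq> p" "b \<noteq> p" "b \<noteq> q" "a \<noteq> q"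
    using two_simplex_labels_distinct[OF assms(2)] two_simplex_labels_distinct[OF assms(3)]
      two_simplex_labels_distinct[OF assms(4)] two_simplex_labels_distinct[OF assms(5)] by auto
  then have "is_cycle (link_adj S c) [a, p, b, q]"
    using assms(2-7) unfolding is_cycle_4 link_adj_def by (simp add: insert_commute)
  ultimately show False
    unfolding girth_ge6_def by fastforce
qed

lemma two_simplex_at_B_vertex:
  assumes "v \<in> vertices S" "label v = B" "x \<in> link_verts S v" "y \<in> link_verts S v"
    and "label x \<noteq> label y"
  shows "two_simplex S {v, x, y}"
proof (rule ccontr)
  assume "\<not> two_simplex S {v, x, y}"
  then have not_adj: "\<not> link_adj S v x y"
    unfolding link_adj_def .
  have "complete_bipartite (link_verts S v) (link_adj S v)"
    and "\<exists>xs. length xs = 4 \<and> is_cycle (link_adj S v) xs"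
    using B_link_condition assms(1,2) by blast+
  then obtain X Y xs where parts: "X \<union> Y = link_verts S v"
    and adj: "\<And>p q. link_adj S v p q \<longleftrightarrow> (p \<in> X \<and> q \<in> Y) \<or> (p \<in> Y \<and> q \<in> X)"
    and square: "length xs = 4" "is_cycle (link_adj S v) xs"
    unfolding complete_bipartite_def by blast
  \<comment> \<open>the square makes both sides nonempty, so \<open>x\<close> and \<open>y\<close> on one side have a common
    neighbour \<open>r\<close> on the other, and \<open>v, x, y, r\<close> would carry four distinct labels\<close>
  have "link_adj S v (xs ! 0) (xs ! 1)"
    using square unfolding is_cycle_def by fastforce
  then obtain p q where "p \<in> X" "q \<in> Y"
    using adj by blast
  moreover have "x \<in> X \<and> y \<in> X \<or> x \<in> Y \<and> y \<in> Y"
    using adj[of x y] not_adj parts assms(3,4) by blast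
  ultimately obtain r where "link_adj S v x r" "link_adj S v y r"
    using adj[of x q] adj[of y q] adj[of x p] adj[of y p] by blast
  then have "distinct [label v, label x, label r]" "distinct [label v, label y, label r]"
    using two_simplex_labels_distinct unfolding link_adj_def by blast+
  then show False
    using no_four_distinct_labels[of B "label x" "label y" "label r"] assms(2,5) by auto
qed

lemma B_vertex_link_edge_in_closed_star:
  assumes "v \<in> vertices S" "label v = B" "x \<in> link_verts S v" "y \<in> link_verts S v"
    and "label x \<noteq> label y"
  shows "{x, y} \<in> closed_star S v"
  using two_simplex_at_B_vertex[OF assms] closed_star_memI[OF simplicial, of "{v, x, y}" v "{x, y}"]
  unfolding two_simplex_def by blast

lemma square_filled:
  assumes "closed_edge_path S [x1, y1, x2, y2]"
    and "label x1 = label x2" "label y1 = label y2" "{label x1, label y1} = {A, C}"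
  obtains u where "label u = B" "two_simplex S {u, x1, y1}" "two_simplex S {u, y1, x2}"
    "two_simplex S {u, x2, y2}" "two_simplex S {u, y2, x1}"
proof -
  consider "label x1 = A" "label y1 = C" | "label x1 = C" "label y1 = A"
    using assms(4) by (auto simp: doubleton_eq_iff)
  then show thesis
  proof cases
    case 1
    then show thesis
      using AC_square_condition[OF assms(1)] assms(2,3) that by metis
  next
    case 2
    have "closed_edge_path S [y1, x1, y2, x2]"
      using assms(1) unfolding closed_edge_path_def is_cycle_4 by (auto simp: insert_commute)
    then obtain u where "label u = B" "two_simplex S {u, y1, x1}" "two_simplex S {u, x1, y2}"
      "two_simplex S {u, y2, x2}" "two_simplex S {u, x2, y1}"
      using AC_square_condition 2 assms(2,3) by metis
    then show thesis
      using that by (simp add: insert_commute)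
  qed
qed

lemma B_vertex_wedge:
  assumes "v \<in> vertices S" "label v = B" "a \<in> link_verts S v" "b \<in> link_verts S v"
    and "label a = label b"
  obtains c where "label c \<notin> {B, label a}" "two_simplex S {c, a, v}" "two_simplex S {c, v, b}"
proof -
  obtain c where c: "two_simplex S {v, a, c}"
    using assms(3) edge_in_two_simplex unfolding link_verts_def by blast
  then have labels: "distinct [B, label a, label c]"
    using two_simplex_labels_distinct assms(2) by metis
  have "{v, c} \<in> S"
    using c face_in_complex[of "{v, a, c}" "{v, c}"] unfolding two_simplex_def by blast
  moreover have "c \<noteq> v"
    using labels assms(2) by auto
  ultimately have "c \<in> link_verts S v"
    unfolding link_verts_def by blast
  then have "two_simplex S {v, b, c}"
    using two_simplex_at_B_vertex assms labels by simp
  show thesis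
  proof (rule that)
    show "label c \<notin> {B, label a}"
      using labels by auto
    show "two_simplex S {c, a, v}" "two_simplex S {c, v, b}"
      using c \<open>two_simplex S {v, b, c}\<close> by (simp_all add: insert_commute)
  qed
qed

lemma no_filled_square_between_B_wedges:
  assumes "two_simplex S {c, a, v}" "two_simplex S {c, v, b}"
    and "two_simplex S {c', a, w}" "two_simplex S {c', w, b}"
    and "v \<noteq> w" "a \<noteq> b" "c \<noteq> c'"
    and "label a = label b" "label c = label c'" "{label a, label c} = {A, C}"
  shows False
proof -
  have "{a, c} \<in> S" "{c, b} \<in> S" "{b, c'} \<in> S" "{c', a} \<in> S"
    using two_simplex_edge[of a c v] two_simplex_edge[of b c v] two_simplex_edge[of b c' w]
      two_simplex_edge[of c' a w] assms(1-4) by (simp_all add: insert_commute)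
  moreover have "distinct [a, c, b, c']"
    using two_simplex_labels_distinct[OF assms(1)] two_simplex_labels_distinct[OF assms(3)]
      assms(6-9) by auto
  ultimately have "closed_edge_path S [a, c, b, c']"
    unfolding closed_edge_path_def is_cycle_4 by (simp add: insert_commute)
  then obtain u where u: "label u = B" "two_simplex S {u, a, c}" "two_simplex S {u, c, b}"
    "two_simplex S {u, b, c'}" "two_simplex S {u, c', a}"
    using square_filled assms(8-10) by metis
  have "label c \<noteq> B" "label c' \<noteq> B"
    using assms(9,10) by (auto simp: doubleton_eq_iff)
  show False
  proof (cases "u = v")
    case False
    show False
      by (rule no_square_around_AC_vertex[of c a v b u])
        (use assms u False \<open>label c \<noteq> B\<close> in \<open>simp_all add: insert_commute\<close>)
  next
    case True
    show False
      by (rule no_square_around_AC_vertex[of c' a w b u])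
        (use assms u True \<open>label c' \<noteq> B\<close> in \<open>simp_all add: insert_commute\<close>)
  qed
qed

text \<open>Two common neighbours \<open>a \<noteq> b\<close> of equal label lie in wedges \<open>a c b\<close> at \<open>v\<close> and
  \<open>a c' b\<close> at \<open>w\<close>; if \<open>c = c'\<close> then \<open>a v b w\<close> is a square in the link of \<open>c\<close>.\<close>

lemma common_link_label_inj:
  assumes "v \<in> vertices S" "w \<in> vertices S" "v \<noteq> w" "label v = B" "label w = B"
  shows "inj_on label (link_verts S v \<inter> link_verts S w)"
proof (rule inj_onI, rule ccontr)
  fix a b
  assume a: "a \<in> link_verts S v \<inter> link_verts S w" and b: "b \<in> link_verts S v \<inter> link_verts S w"
    and same: "label a = label b" and "a \<noteq> b"
  obtain c where c: "label c \<notin> {B, label a}" "two_simplex S {c, a, v}" "two_simplex S {c, v, b}"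
    using B_vertex_wedge[OF assms(1,4) _ _ same] a b by blast
  obtain c' where c': "label c' \<notin> {B, label a}" "two_simplex S {c', a, w}" "two_simplex S {c', w, b}"
    using B_vertex_wedge[OF assms(2,5) _ _ same] a b by blast
  have "label a \<noteq> B"
    using two_simplex_labels_distinct[OF c(2)] c(1) assms(4) by auto
  then have "label c = label c'" and "{label a, label c} = {A, C}"
    using c(1) c'(1) no_four_distinct_labels[of B "label a" "label c" "label c'"]
    by (cases "label a"; cases "label c"; auto)+
  show False
  proof (cases "c = c'")
    case True
    show False
      by (rule no_square_around_AC_vertex[of c a v b w])
        (use c c' True \<open>v \<noteq> w\<close> \<open>a \<noteq> b\<close> in \<open>simp_all add: insert_commute\<close>)
  next
    case False
    with c c' assms(3) \<open>a \<noteq> b\<close> same \<open>label c = label c'\<close> \<open>{label a, label c} = {A, C}\<close>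
    show False
      by (intro no_filled_square_between_B_wedges[of c a v b c' w])
  qed
qed

lemma common_link_card_le_2:
  assumes "v \<in> vertices S" "w \<in> vertices S" "v \<noteq> w" "label v = B" "label w = B"
  shows "finite (link_verts S v \<inter> link_verts S w)" "card (link_verts S v \<inter> link_verts S w) \<le> 2"
proof -
  let ?N = "link_verts S v \<inter> link_verts S w"
  have inj: "inj_on label ?N"
    using common_link_label_inj[OF assms] .
  have "label x \<noteq> B" if "x \<in> ?N" for x
    using that assms(4) edge_labels_distinct unfolding link_verts_def by fastforce
  then have labels: "label ` ?N \<subseteq> {A, C}"
    by (force intro: lbl.exhaust)
  then show "finite ?N"
    using inj finite_imageD finite_subset by blast
  have "card ?N = card (label ` ?N)"
    using card_image[OF inj] by simp
  also have "\<dots> \<le> card {A, C}"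
    using labels by (rule card_mono[rotated]) simp
  finally show "card ?N \<le> 2"
    by simp
qed

lemma closed_star_inter_B_vertices:
  assumes "v \<in> vertices S" "w \<in> vertices S" "v \<noteq> w" "label v = B" "label w = B"
  shows "closed_star S v \<inter> closed_star S w = {\<tau>. \<tau> \<noteq> {} \<and> \<tau> \<subseteq> link_verts S v \<inter> link_verts S w}"
proof
  let ?N = "link_verts S v \<inter> link_verts S w"
  have "{v, w} \<notin> S"
    using edge_labels_distinct assms(3-5) by metis
  then show "closed_star S v \<inter> closed_star S w \<subseteq> {\<tau>. \<tau> \<noteq> {} \<and> \<tau> \<subseteq> ?N}"
    by (rule closed_star_inter_subset_common_link[OF simplicial])
  show "{\<tau>. \<tau> \<noteq> {} \<and> \<tau> \<subseteq> ?N} \<subseteq> closed_star S v \<inter> closed_star S w"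
  proof clarify
    fix \<tau> assume "\<tau> \<noteq> {}" "\<tau> \<subseteq> ?N"
    have "finite ?N" "card ?N \<le> 2"
      using common_link_card_le_2[OF assms] by blast+
    with \<open>\<tau> \<subseteq> ?N\<close> have "finite \<tau>" "card \<tau> \<le> 2"
      using finite_subset card_mono[of ?N \<tau>] by (blast, linarith)
    then show "\<tau> \<in> closed_star S v \<inter> closed_star S w"
    proof (cases rule: card_le_2_cases)
      case 1
      with \<open>\<tau> \<noteq> {}\<close> show ?thesis
        by blast
    next
      case (2 x)
      with \<open>\<tau> \<subseteq> ?N\<close> show ?thesis
        using singleton_in_closed_star[OF simplicial] by blast
    next
      case (3 x y)
      with \<open>\<tau> \<subseteq> ?N\<close> have "label x \<noteq> label y"
        using common_link_label_inj[OF assms] unfolding inj_on_def by blast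
      with 3 \<open>\<tau> \<subseteq> ?N\<close> show ?thesis
        using B_vertex_link_edge_in_closed_star assms by auto
    qed
  qed
qed

end

theorem lemma5p5:
  fixes S :: "'v set set" and m :: "'v set \<Rightarrow> 'v \<Rightarrow> lbl" and v w :: 'v
  assumes "marked_A3 S m" and "CCCC S m"
    and "v \<in> vertices S" and "w \<in> vertices S" and "v \<noteq> w"
    and "vtype S m v = B" and "vtype S m w = B"
  shows "closed_star S v \<inter> closed_star S w = {} \<or>
         (\<exists>x. closed_star S v \<inter> closed_star S w = {{x}}) \<or>
         (\<exists>x y. x \<noteq> y \<and> {x, y} \<in> S \<and> closed_star S v \<inter> closed_star S w = {{x}, {y}, {x, y}})"
proof -
  interpret CCCC_complex S m
    using assms(1,2) by unfold_locales
  let ?I = "closed_star S v \<inter> closed_star S w"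
  have inter: "?I = {\<tau>. \<tau> \<noteq> {} \<and> \<tau> \<subseteq> link_verts S v \<inter> link_verts S w}"
    using closed_star_inter_B_vertices[OF assms(3-7)] .
  show ?thesis
  proof (cases rule: nonempty_subsets_card_le_2[OF common_link_card_le_2[OF assms(3-7)], folded inter])
    case (3 x y)
    moreover have "{x, y} \<in> S"
      using \<open>?I = {{x}, {y}, {x, y}}\<close> unfolding closed_star_def by blast
    ultimately show ?thesis
      by blast
  qed blast+
qed

end
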